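(* Let $L\ge 2$, $d\ge1$, and let $x_0,\dots,x_{L-1}\in\mathbb{R}^d$ be pairwise distinct templates of equal Euclidean norm. Let $n_0,\dots,n_{M-1}$ be i.i.d. $\mathcal{N}(0,I_{d\times d})$ and let $\hat{x}_0,\dots,\hat{x}_{L-1}$ be the output of either the hard-assignment or the soft-assignment algorithm. Then for every $0\le\ell\le L-1$ there exist real coefficients $\alpha_{\ell k}$, $k=0,\dots,L-1$, such that $\hat{x}_\ell\to\sum_{k=0}^{L-1}\alpha_{\ell k}x_k$ almost surely as $M\to\infty$.
   Context: Hard-assignment: $\hat{R}_i=\arg\max_\ell\langle n_i,x_\ell\rangle$, $\mathcal{A}_\ell=\{n_i:\hat{R}_i=\ell\}$, $\hat{x}_\ell=\frac{1}{|\mathcal{A}_\ell|}\sum_{n_i\in\mathcal{A}_\ell}n_i$. Soft-assignment: $p_i^{(\ell)}=\frac{\exp(\langle n_i,x_\ell\rangle)}{\sum_r\exp(\langle n_i,x_r\rangle)}$, $\hat{x}_\ell=\frac{\sum_ip_i^{(\ell)}n_i}{\sum_ip_i^{(\ell)}}$. *)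

theory Defs
  imports "HOL-Probability.Probability"
begin

text \<open>Templates are x 0, ..., x (L-1) in real^'d; the noise samples are given as a
  sequence ns :: nat => real^'d, of which the first m are used.\<close>

text \<open>Hard assignment: index of a template maximising the inner product
  (ties, which occur with probability zero, are broken towards the least index).\<close>
definition hard_assign :: "(nat \<Rightarrow> real^'d) \<Rightarrow> nat \<Rightarrow> real^'d \<Rightarrow> nat" where
  "hard_assign x L v = (LEAST l. l < L \<and> (\<forall>r<L. inner v (x r) \<le> inner v (x l)))"

text \<open>Hard-assignment estimate of template l from the first m samples
  (empty cluster gives 0, since 1/0 = 0).\<close>
definition hard_est :: "(nat \<Rightarrow> real^'d) \<Rightarrow> nat \<Rightarrow> (nat \<Rightarrow> real^'d) \<Rightarrow> nat \<Rightarrow> nat \<Rightarrow> real^'d" where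
  "hard_est x L ns m l =
     (1 / real (card {i\<in>{..<m}. hard_assign x L (ns i) = l})) *\<^sub>R
       (\<Sum>i\<in>{i\<in>{..<m}. hard_assign x L (ns i) = l}. ns i)"

definition soft_weight :: "(nat \<Rightarrow> real^'d) \<Rightarrow> nat \<Rightarrow> real^'d \<Rightarrow> nat \<Rightarrow> real" where
  "soft_weight x L v l = exp (inner v (x l)) / (\<Sum>r<L. exp (inner v (x r)))"

definition soft_est :: "(nat \<Rightarrow> real^'d) \<Rightarrow> nat \<Rightarrow> (nat \<Rightarrow> real^'d) \<Rightarrow> nat \<Rightarrow> nat \<Rightarrow> real^'d" where
  "soft_est x L ns m l =
     (1 / (\<Sum>i<m. soft_weight x L (ns i) l)) *\<^sub>R (\<Sum>i<m. soft_weight x L (ns i) l *\<^sub>R ns i)"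

end

theory Submission
  imports Defs "HOL-Library.Discrete_Functions"
begin

text \<open>Both estimates are weighted means \<open>(\<Sum>i<m. G (n i) *\<^sub>R n i) / (\<Sum>i<m. G (n i))\<close> of the
  samples, with weight \<open>0 \<le> G \<le> 1\<close> the indicator of the cluster of template l, resp. the softmax
  probability of l. A strong law of large numbers for pairwise independent variables with bounded
  second moments (Etemadi's argument: Chebyshev and Borel-Cantelli along the squares, monotonicity
  in between) makes numerator and denominator, divided by m, converge almost surely to
  \<open>E[G(n) n]\<close> and \<open>E[G(n)]\<close>. The vector \<open>E[G(n) n]\<close> lies in the span of the templates: for u
  orthogonal to all of them, Gaussian integration by parts (Stein's identity, coordinatewise) gives
  \<open>E[(n \<bullet> u) F(n)] = E[DF(n) u]\<close> for smooth bounded F, and the derivative of a softmax in the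
  templates vanishes in direction u. The hard indicator is the pointwise limit of softmaxes at
  temperature tending to 0, so dominated convergence extends the identity to it.\<close>

section \<open>A strong law of large numbers for pairwise independent variables\<close>

lemma mono_ratio_between_squares:
  fixes S :: "nat \<Rightarrow> real"
  assumes mono: "mono S" and nonneg: "\<And>a. 0 \<le> S a" and m: "1 \<le> m"
  defines "k \<equiv> floor_sqrt m"
  shows "S (k^2) / real ((k + 1)^2) \<le> S m / real m"
    and "S m / real m \<le> S ((k + 1)^2) / real (k^2)"
proof -
  have k0: "0 < k" using m by (simp add: k_def)
  have lo: "k^2 \<le> m" by (simp add: k_def)
  have hi: "m < (k + 1)^2" using Suc_floor_sqrt_power2_gt[of m] by (simp add: k_def)
  have "S (k^2) / real ((k + 1)^2) \<le> S m / real ((k + 1)^2)"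
    by (intro divide_right_mono monoD[OF mono] lo) simp
  also have "\<dots> \<le> S m / real m"
    using m hi nonneg[of m] by (intro divide_left_mono) (simp_all del: of_nat_power)
  finally show "S (k^2) / real ((k + 1)^2) \<le> S m / real m" .
  have "S m / real m \<le> S m / real (k^2)"
    using m lo k0 nonneg[of m] by (intro divide_left_mono) (simp_all del: of_nat_power)
  also have "\<dots> \<le> S ((k + 1)^2) / real (k^2)"
    using hi by (intro divide_right_mono monoD[OF mono]) auto
  finally show "S m / real m \<le> S ((k + 1)^2) / real (k^2)" .
qed

lemma LIMSEQ_ratio_of_mono_along_squares:
  fixes S :: "nat \<Rightarrow> real"
  assumes mono: "mono S" and nonneg: "\<And>a. 0 \<le> S a"
    and lim: "(\<lambda>k. S (k^2) / real (k^2)) \<longlonglongrightarrow> \<mu>"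
  shows "(\<lambda>m. S m / real m) \<longlonglongrightarrow> \<mu>"
proof (rule tendsto_sandwich)
  have floor_sqrt_at_top: "filterlim floor_sqrt at_top sequentially"
    unfolding filterlim_at_top eventually_sequentially
    by (auto intro!: exI[of _ "K^2" for K] simp: le_floor_sqrt_iff)
  have "(\<lambda>k. real (k^2) / real ((k + 1)^2)) \<longlonglongrightarrow> 1" "(\<lambda>k. real ((k + 1)^2) / real (k^2)) \<longlonglongrightarrow> 1"
    by real_asymp+
  from tendsto_mult[OF lim this(1)] tendsto_mult[OF LIMSEQ_Suc[OF lim] this(2)]
  have "(\<lambda>k. S (k^2) / real (k^2) * (real (k^2) / real ((k + 1)^2))) \<longlonglongrightarrow> \<mu>"
    "(\<lambda>k. S ((k + 1)^2) / real ((k + 1)^2) * (real ((k + 1)^2) / real (k^2))) \<longlonglongrightarrow> \<mu>"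
    by (simp_all only: mult_1_right Suc_eq_plus1)
  then have lower: "(\<lambda>k. S (k^2) / real ((k + 1)^2)) \<longlonglongrightarrow> \<mu>"
    and upper: "(\<lambda>k. S ((k + 1)^2) / real (k^2)) \<longlonglongrightarrow> \<mu>"
    by (auto elim!: Lim_transform_eventually intro: eventually_sequentiallyI[of 1])
  show "(\<lambda>m. S (floor_sqrt m ^ 2) / real ((floor_sqrt m + 1)^2)) \<longlonglongrightarrow> \<mu>"
    using filterlim_compose[OF lower floor_sqrt_at_top] by (simp add: o_def)
  show "(\<lambda>m. S ((floor_sqrt m + 1)^2) / real (floor_sqrt m ^ 2)) \<longlonglongrightarrow> \<mu>"
    using filterlim_compose[OF upper floor_sqrt_at_top] by (simp add: o_def)
  show "\<forall>\<^sub>F m in sequentially. S (floor_sqrt m ^ 2) / real ((floor_sqrt m + 1)^2) \<le> S m / real m"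
    "\<forall>\<^sub>F m in sequentially. S m / real m \<le> S ((floor_sqrt m + 1)^2) / real (floor_sqrt m ^ 2)"
    using mono_ratio_between_squares[OF mono nonneg] by (auto intro: eventually_sequentiallyI[of 1])
qed

lemma integrable_mult_of_square_integrable:
  fixes X Y :: "'a \<Rightarrow> real"
  assumes "X \<in> borel_measurable M" "Y \<in> borel_measurable M"
    and "integrable M (\<lambda>\<omega>. (X \<omega>)^2)" "integrable M (\<lambda>\<omega>. (Y \<omega>)^2)"
  shows "integrable M (\<lambda>\<omega>. X \<omega> * Y \<omega>)"
proof (rule Bochner_Integration.integrable_bound[where f="\<lambda>\<omega>. (X \<omega>)^2 + (Y \<omega>)^2"])
  have "\<bar>X \<omega> * Y \<omega>\<bar> \<le> (X \<omega>)^2 + (Y \<omega>)^2" for \<omega>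
  proof -
    have "2 * \<bar>X \<omega> * Y \<omega>\<bar> \<le> (X \<omega>)^2 + (Y \<omega>)^2"
      using sum_squares_bound[of "\<bar>X \<omega>\<bar>" "\<bar>Y \<omega>\<bar>"] by (simp add: abs_mult power2_eq_square)
    then show ?thesis using abs_ge_zero[of "X \<omega> * Y \<omega>"] by linarith
  qed
  then show "AE \<omega> in M. norm (X \<omega> * Y \<omega>) \<le> norm ((X \<omega>)^2 + (Y \<omega>)^2)"
    by simp
qed (use assms in auto)

lemma (in prob_space) expectation_sum_square_le:
  fixes D :: "nat \<Rightarrow> 'a \<Rightarrow> real"
  assumes meas: "\<And>i. D i \<in> borel_measurable M"
    and sq: "\<And>i. integrable M (\<lambda>\<omega>. (D i \<omega>)^2)"
    and centred: "\<And>i. expectation (D i) = 0"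
    and bound: "\<And>i. expectation (\<lambda>\<omega>. (D i \<omega>)^2) \<le> C"
    and indep: "\<And>i j. i \<noteq> j \<Longrightarrow> indep_var borel (D i) borel (D j)"
  shows "integrable M (\<lambda>\<omega>. (\<Sum>i<m. D i \<omega>)^2)"
    and "expectation (\<lambda>\<omega>. (\<Sum>i<m. D i \<omega>)^2) \<le> real m * C"
proof -
  have int: "integrable M (D i)" for i
    using square_integrable_imp_integrable[OF meas sq] .
  have int_mult: "integrable M (\<lambda>\<omega>. D a \<omega> * D b \<omega>)" for a b
    by (rule integrable_mult_of_square_integrable[OF meas meas sq sq])
  have uncorrelated: "expectation (\<lambda>\<omega>. D a \<omega> * D b \<omega>) = 0" if "a \<noteq> b" for a b
    using indep_var_lebesgue_integral[OF indep[OF that] int int] centred by simp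
  have expand: "(\<lambda>\<omega>. (\<Sum>i<m. D i \<omega>)^2) = (\<lambda>\<omega>. \<Sum>a<m. \<Sum>b<m. D a \<omega> * D b \<omega>)"
    by (simp add: power2_eq_square sum_product)
  show "integrable M (\<lambda>\<omega>. (\<Sum>i<m. D i \<omega>)^2)"
    unfolding expand using int_mult by auto
  have "expectation (\<lambda>\<omega>. (\<Sum>i<m. D i \<omega>)^2) = (\<Sum>a<m. \<Sum>b<m. expectation (\<lambda>\<omega>. D a \<omega> * D b \<omega>))"
    unfolding expand using int_mult by simp
  also have "\<dots> = (\<Sum>a<m. expectation (\<lambda>\<omega>. (D a \<omega>)^2))"
  proof (rule sum.cong[OF refl])
    fix a assume "a \<in> {..<m}"
    then have "(\<Sum>b<m. expectation (\<lambda>\<omega>. D a \<omega> * D b \<omega>)) = (\<Sum>b\<in>{a}. expectation (\<lambda>\<omega>. D a \<omega> * D b \<omega>))"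
      by (intro sum.mono_neutral_right) (auto simp: uncorrelated)
    then show "(\<Sum>b<m. expectation (\<lambda>\<omega>. D a \<omega> * D b \<omega>)) = expectation (\<lambda>\<omega>. (D a \<omega>)^2)"
      by (simp add: power2_eq_square)
  qed
  also have "\<dots> \<le> real m * C"
    using sum_mono[of "{..<m}", OF bound] by simp
  finally show "expectation (\<lambda>\<omega>. (\<Sum>i<m. D i \<omega>)^2) \<le> real m * C" .
qed

lemma (in prob_space) prob_mean_deviation_le:
  fixes X :: "nat \<Rightarrow> 'a \<Rightarrow> real"
  assumes meas: "\<And>i. X i \<in> borel_measurable M"
    and sq: "\<And>i. integrable M (\<lambda>\<omega>. (X i \<omega>)^2)"
    and mean: "\<And>i. expectation (X i) = \<mu>"
    and bound: "\<And>i. expectation (\<lambda>\<omega>. (X i \<omega>)^2) \<le> C"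
    and indep: "\<And>i j. i \<noteq> j \<Longrightarrow> indep_var borel (X i) borel (X j)"
    and m: "0 < m" and e: "0 < e"
  shows "prob {\<omega>\<in>space M. e \<le> \<bar>(\<Sum>i<m. X i \<omega>) / real m - \<mu>\<bar>} \<le> C / (real m * e^2)"
proof -
  define D where "D i \<omega> = X i \<omega> - \<mu>" for i \<omega>
  have int: "integrable M (X i)" for i
    using square_integrable_imp_integrable[OF meas sq] .
  have D_meas: "D i \<in> borel_measurable M" for i
    unfolding D_def using meas by measurable
  have D_square: "(D i \<omega>)^2 = (X i \<omega>)^2 - 2 * \<mu> * X i \<omega> + \<mu>^2" for i \<omega>
    by (simp add: D_def power2_eq_square algebra_simps)
  have D_sq: "integrable M (\<lambda>\<omega>. (D i \<omega>)^2)" for i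
    unfolding D_square using sq int by auto
  have D_centred: "expectation (D i) = 0" for i
    unfolding D_def using int mean by (simp add: prob_space)
  have D_bound: "expectation (\<lambda>\<omega>. (D i \<omega>)^2) \<le> C" for i
  proof -
    have "expectation (\<lambda>\<omega>. (D i \<omega>)^2) = expectation (\<lambda>\<omega>. (X i \<omega>)^2) - \<mu>^2"
      unfolding D_square using sq int mean by (simp add: prob_space power2_eq_square)
    then show ?thesis using bound[of i] zero_le_power2[of \<mu>] by linarith
  qed
  have D_indep: "indep_var borel (D i) borel (D j)" if "i \<noteq> j" for i j
  proof -
    have "indep_var borel ((\<lambda>t. t - \<mu>) \<circ> X i) borel ((\<lambda>t. t - \<mu>) \<circ> X j)"
      by (rule indep_var_compose[OF indep[OF that]]) auto
    then show ?thesis by (simp add: D_def[abs_def] o_def)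
  qed
  note sum_bounds = expectation_sum_square_le[OF D_meas D_sq D_centred D_bound D_indep, where m=m]
  have "\<bar>(\<Sum>i<m. X i \<omega>) / real m - \<mu>\<bar> = \<bar>\<Sum>i<m. D i \<omega>\<bar> / real m" for \<omega>
    using m by (simp add: D_def sum_subtractf field_simps)
  then have "{\<omega>\<in>space M. e \<le> \<bar>(\<Sum>i<m. X i \<omega>) / real m - \<mu>\<bar>} = {\<omega>\<in>space M. real m * e \<le> \<bar>\<Sum>i<m. D i \<omega>\<bar>}"
    using m by (auto simp: field_simps)
  also have "prob \<dots> \<le> expectation (\<lambda>\<omega>. (\<Sum>i<m. D i \<omega>)^2) / (real m * e)^2"
    using sum_bounds(1) m e D_meas by (intro second_moment_method) auto
  also have "\<dots> \<le> (real m * C) / (real m * e)^2"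
    using sum_bounds(2) by (intro divide_right_mono) auto
  also have "\<dots> = C / (real m * e^2)"
    using m by (simp add: power2_eq_square)
  finally show ?thesis .
qed

lemma (in prob_space) strong_law_along_squares:
  fixes X :: "nat \<Rightarrow> 'a \<Rightarrow> real"
  assumes meas: "\<And>i. X i \<in> borel_measurable M"
    and sq: "\<And>i. integrable M (\<lambda>\<omega>. (X i \<omega>)^2)"
    and mean: "\<And>i. expectation (X i) = \<mu>"
    and bound: "\<And>i. expectation (\<lambda>\<omega>. (X i \<omega>)^2) \<le> C"
    and indep: "\<And>i j. i \<noteq> j \<Longrightarrow> indep_var borel (X i) borel (X j)"
  shows "AE \<omega> in M. (\<lambda>k. (\<Sum>i<k^2. X i \<omega>) / real (k^2)) \<longlonglongrightarrow> \<mu>"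
proof -
  define A where
    "A p k = {\<omega>\<in>space M. 1 / real (Suc p) \<le> \<bar>(\<Sum>i<(k+1)^2. X i \<omega>) / real ((k+1)^2) - \<mu>\<bar>}" for p k
  have A_sets: "A p k \<in> events" for p k
    unfolding A_def using meas by measurable
  have "AE \<omega> in M. eventually (\<lambda>k. \<omega> \<in> space M - A p k) sequentially" for p
  proof (rule borel_cantelli_AE1)
    have bound_A: "prob (A p k) \<le> C * real (Suc p)^2 * inverse (real (k+1) ^ 2)" for k
      using prob_mean_deviation_le[where X=X, OF meas sq mean bound indep, of "(k+1)^2" "1 / real (Suc p)"]
      by (simp add: A_def field_simps)
    have "summable (\<lambda>k. C * real (Suc p)^2 * inverse (real (k+1) ^ 2))"
      using summable_ignore_initial_segment[OF inverse_power_summable[of 2], of 1]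
      by (intro summable_mult) simp
    then show "summable (\<lambda>k. prob (A p k))"
      by (rule summable_comparison_test') (use bound_A in auto)
  qed (simp_all add: A_sets emeasure_eq_measure)
  then have "AE \<omega> in M. \<forall>p. eventually (\<lambda>k. \<omega> \<in> space M - A p k) sequentially"
    by (simp add: AE_all_countable)
  then show ?thesis
  proof (rule AE_mp[OF _ AE_I2], intro impI)
    fix \<omega> assume \<omega>: "\<omega> \<in> space M" and ev: "\<forall>p. eventually (\<lambda>k. \<omega> \<in> space M - A p k) sequentially"
    have "(\<lambda>k. (\<Sum>i<(k+1)^2. X i \<omega>) / real ((k+1)^2)) \<longlonglongrightarrow> \<mu>"
    proof (rule tendstoI)
      fix e :: real assume "0 < e"
      then obtain p where p: "1 / real (Suc p) < e"
        using nat_approx_posE by blast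
      from ev[rule_format, of p]
      show "eventually (\<lambda>k. dist ((\<Sum>i<(k+1)^2. X i \<omega>) / real ((k+1)^2)) \<mu> < e) sequentially"
        by (rule eventually_mono) (use \<omega> p in \<open>auto simp: A_def dist_real_def\<close>)
    qed
    then show "(\<lambda>k. (\<Sum>i<k^2. X i \<omega>) / real (k^2)) \<longlonglongrightarrow> \<mu>"
      using filterlim_sequentially_Suc[where f="\<lambda>k. (\<Sum>i<k^2. X i \<omega>) / real (k^2)"] by simp
  qed
qed

lemma (in prob_space) strong_law_nonneg:
  fixes X :: "nat \<Rightarrow> 'a \<Rightarrow> real"
  assumes meas: "\<And>i. X i \<in> borel_measurable M"
    and nonneg: "\<And>i \<omega>. 0 \<le> X i \<omega>"
    and sq: "\<And>i. integrable M (\<lambda>\<omega>. (X i \<omega>)^2)"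
    and mean: "\<And>i. expectation (X i) = \<mu>"
    and bound: "\<And>i. expectation (\<lambda>\<omega>. (X i \<omega>)^2) \<le> C"
    and indep: "\<And>i j. i \<noteq> j \<Longrightarrow> indep_var borel (X i) borel (X j)"
  shows "AE \<omega> in M. (\<lambda>m. (\<Sum>i<m. X i \<omega>) / real m) \<longlonglongrightarrow> \<mu>"
proof -
  have mono: "mono (\<lambda>m. \<Sum>i<m. X i \<omega>)" for \<omega>
    using nonneg by (intro monoI sum_mono2) auto
  have "AE \<omega> in M. (\<lambda>k. (\<Sum>i<k^2. X i \<omega>) / real (k^2)) \<longlonglongrightarrow> \<mu>"
    by (rule strong_law_along_squares[where X=X, OF meas sq mean bound indep])
  then show ?thesis
    by (rule AE_mp) (auto intro!: AE_I2 LIMSEQ_ratio_of_mono_along_squares[OF mono] sum_nonneg nonneg)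
qed

section \<open>Gaussian integration by parts\<close>

lemma tendsto_integral_symmetric_truncation:
  fixes h w :: "real \<Rightarrow> real"
  assumes h: "h \<in> borel_measurable borel" and w: "integrable lborel w" and dominated: "\<And>t. \<bar>h t\<bar> \<le> w t"
  shows "(\<lambda>k::nat. \<integral>t. indicator {- real k..real k} t * h t \<partial>lborel) \<longlonglongrightarrow> (\<integral>t. h t \<partial>lborel)"
proof (rule integral_dominated_convergence[where w=w])
  show "AE t in lborel. (\<lambda>k. indicator {- real k..real k} t * h t) \<longlonglongrightarrow> h t"
  proof (intro AE_I2)
    fix t :: real
    obtain N :: nat where "\<bar>t\<bar> \<le> real N" using real_arch_simple by blast
    then have "eventually (\<lambda>k. h t = indicator {- real k..real k} t * h t) sequentially"
      by (intro eventually_sequentiallyI[of N]) (auto simp: indicator_def)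
    then show "(\<lambda>k. indicator {- real k..real k} t * h t) \<longlonglongrightarrow> h t"
      by (rule Lim_transform_eventually[OF tendsto_const])
  qed
  show "AE t in lborel. norm (indicator {- real k..real k} t * h t) \<le> w t" for k
    using dominated by (intro AE_I2) (auto simp: indicator_def order_trans[OF _ dominated])
qed (use h w in auto)

lemma std_normal_density_has_real_derivative:
  "(std_normal_density has_real_derivative (- t * std_normal_density t)) (at t)"
  unfolding std_normal_density_def[abs_def]
  by (auto intro!: derivative_eq_intros simp: field_simps power2_eq_square)

lemma std_normal_density_LIMSEQ_0: "(\<lambda>k::nat. std_normal_density (real k)) \<longlonglongrightarrow> 0"
  unfolding std_normal_density_def by real_asymp

lemma std_normal_integration_by_parts_interval:
  fixes g g' :: "real \<Rightarrow> real"
  assumes deriv: "\<And>t. (g has_real_derivative g' t) (at t)" and cont: "\<And>t. isCont g' t"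
    and a: "0 \<le> a"
  shows "(\<integral>t. indicator {-a..a} t * (std_normal_density t * (t * g t)) \<partial>lborel) =
    (\<integral>t. indicator {-a..a} t * (std_normal_density t * g' t) \<partial>lborel)
      - (g a * std_normal_density a - g (-a) * std_normal_density (-a))"
proof -
  have "isCont std_normal_density t" for t
    using DERIV_isCont[OF std_normal_density_has_real_derivative] .
  then have "(\<integral>t. (g t * (- t * std_normal_density t)) * indicator {-a..a} t \<partial>lborel)
      = g a * std_normal_density a - g (-a) * std_normal_density (-a)
        - (\<integral>t. (g' t * std_normal_density t) * indicator {-a..a} t \<partial>lborel)"
    using a deriv cont std_normal_density_has_real_derivative
    by (intro integral_by_parts) (auto intro!: continuous_intros)
  then show ?thesis
    by (simp add: ac_simps)
qed

lemma std_normal_boundary_terms_LIMSEQ_0: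
  fixes g :: "real \<Rightarrow> real"
  assumes bound: "\<And>t. \<bar>g t\<bar> \<le> B"
  shows "(\<lambda>k::nat. g (real k) * std_normal_density (real k) - g (- real k) * std_normal_density (- real k))
    \<longlonglongrightarrow> 0"
proof -
  let ?\<phi> = std_normal_density
  have "?\<phi> (- t) = ?\<phi> t" for t by (simp add: std_normal_density_def)
  then have right: "norm (g (real k) * ?\<phi> (real k)) \<le> B * ?\<phi> (real k)"
    and left: "norm (g (- real k) * ?\<phi> (- real k)) \<le> B * ?\<phi> (real k)" for k :: nat
    using mult_right_mono[OF bound normal_density_nonneg] by (simp_all add: abs_mult)
  have lim0: "(\<lambda>k::nat. B * ?\<phi> (real k)) \<longlonglongrightarrow> 0"
    using tendsto_mult_right_zero[OF std_normal_density_LIMSEQ_0] by simp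
  have right0: "(\<lambda>k::nat. g (real k) * ?\<phi> (real k)) \<longlonglongrightarrow> 0"
    by (rule Lim_null_comparison[OF always_eventually lim0]) (use right in blast)
  have left0: "(\<lambda>k::nat. g (- real k) * ?\<phi> (- real k)) \<longlonglongrightarrow> 0"
    by (rule Lim_null_comparison[OF always_eventually lim0]) (use left in blast)
  show ?thesis
    using tendsto_diff[OF right0 left0] by simp
qed

lemma std_normal_stein_identity:
  fixes g g' :: "real \<Rightarrow> real"
  assumes deriv: "\<And>t. (g has_real_derivative g' t) (at t)" and cont: "\<And>t. isCont g' t"
    and bound: "\<And>t. \<bar>g t\<bar> \<le> B" and bound': "\<And>t. \<bar>g' t\<bar> \<le> B"
  shows "(\<integral>t. std_normal_density t * (t * g t) \<partial>lborel) = (\<integral>t. std_normal_density t * g' t \<partial>lborel)"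
proof -
  let ?\<phi> = std_normal_density
  have g_meas: "g \<in> borel_measurable borel"
    using DERIV_isCont[OF deriv] by (intro borel_measurable_continuous_onI continuous_at_imp_continuous_on) auto
  have g'_meas: "g' \<in> borel_measurable borel"
    using cont by (intro borel_measurable_continuous_onI continuous_at_imp_continuous_on) auto
  have lhs: "(\<lambda>k::nat. \<integral>t. indicator {- real k..real k} t * (?\<phi> t * (t * g t)) \<partial>lborel)
      \<longlonglongrightarrow> (\<integral>t. ?\<phi> t * (t * g t) \<partial>lborel)"
  proof (rule tendsto_integral_symmetric_truncation[where w="\<lambda>t. B * (?\<phi> t * \<bar>t\<bar>)"])
    show "\<bar>?\<phi> t * (t * g t)\<bar> \<le> B * (?\<phi> t * \<bar>t\<bar>)" for t
      using mult_left_mono[OF bound[of t], of "?\<phi> t * \<bar>t\<bar>"] by (simp add: abs_mult ac_simps)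
  qed (use g_meas integrable_std_normal_moment_abs[of 1] in auto)
  have rhs: "(\<lambda>k::nat. \<integral>t. indicator {- real k..real k} t * (?\<phi> t * g' t) \<partial>lborel)
      \<longlonglongrightarrow> (\<integral>t. ?\<phi> t * g' t \<partial>lborel)"
  proof (rule tendsto_integral_symmetric_truncation[where w="\<lambda>t. B * ?\<phi> t"])
    show "\<bar>?\<phi> t * g' t\<bar> \<le> B * ?\<phi> t" for t
      using mult_right_mono[OF bound'[of t] normal_density_nonneg[of 0 1 t]] by (simp add: abs_mult mult.commute)
  qed (use g'_meas in auto)
  note boundary = std_normal_boundary_terms_LIMSEQ_0[of g, OF bound]
  have "(\<lambda>k::nat. \<integral>t. indicator {- real k..real k} t * (?\<phi> t * (t * g t)) \<partial>lborel)
      \<longlonglongrightarrow> (\<integral>t. ?\<phi> t * g' t \<partial>lborel) - 0"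
    using std_normal_integration_by_parts_interval[OF deriv cont] tendsto_diff[OF rhs boundary] by simp
  from LIMSEQ_unique[OF lhs this] show ?thesis by simp
qed

lemma has_real_derivative_along_line:
  fixes F :: "'a::real_normed_vector \<Rightarrow> real"
  assumes deriv: "\<And>v. (F has_derivative F' v) (at v)"
  shows "((\<lambda>t. F (w + t *\<^sub>R e)) has_real_derivative F' (w + t *\<^sub>R e) e) (at t)"
proof -
  have "((\<lambda>t. F (w + t *\<^sub>R e)) has_derivative (\<lambda>s. F' (w + t *\<^sub>R e) (s *\<^sub>R e))) (at t)"
    by (rule has_derivative_compose[OF _ deriv]) (auto intro!: derivative_eq_intros)
  moreover have "(\<lambda>s. F' (w + t *\<^sub>R e) (s *\<^sub>R e)) = (*) (F' (w + t *\<^sub>R e) e)"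
    using linear_cmul[OF has_derivative_linear[OF deriv]] by (auto simp: mult.commute)
  ultimately show ?thesis
    by (simp add: has_field_derivative_def)
qed

lemma std_normal_stein_identity_along_line:
  fixes F :: "'a::real_normed_vector \<Rightarrow> real"
  assumes deriv: "\<And>v. (F has_derivative F' v) (at v)" and cont: "continuous_on UNIV (\<lambda>v. F' v e)"
    and bound: "\<And>v. \<bar>F v\<bar> \<le> B" and bound': "\<And>v. \<bar>F' v e\<bar> \<le> B"
  shows "(\<integral>t. std_normal_density t * (t * F (w + t *\<^sub>R e)) \<partial>lborel) =
    (\<integral>t. std_normal_density t * F' (w + t *\<^sub>R e) e \<partial>lborel)"
proof -
  have "continuous_on UNIV (\<lambda>t. F' (w + t *\<^sub>R e) e)"
    by (intro continuous_on_compose2[OF cont] continuous_intros) auto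
  then show ?thesis
    using bound bound' has_real_derivative_along_line[OF deriv]
    by (intro std_normal_stein_identity[where B=B]) (auto simp: continuous_on_eq_continuous_at)
qed

lemma linear_eq_sum_axis:
  fixes f :: "real^'n \<Rightarrow> real"
  assumes "linear f"
  shows "f u = (\<Sum>j\<in>UNIV. u $ j * f (axis j 1))"
proof -
  have "(\<Sum>j\<in>UNIV. u $ j *\<^sub>R axis j 1) = u"
    using basis_expansion[of u] by (simp add: scalar_mult_eq_scaleR)
  then have "f u = f (\<Sum>j\<in>UNIV. u $ j *\<^sub>R axis j 1)"
    by simp
  also have "\<dots> = (\<Sum>j\<in>UNIV. u $ j * f (axis j 1))"
    by (simp add: linear_sum[OF assms] linear_cmul[OF assms])
  finally show ?thesis .
qed

section \<open>Samples with independent standard normal coordinates\<close>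

lemma borel_measurable_vecI:
  fixes f :: "'a \<Rightarrow> real^'n"
  assumes "\<And>j. (\<lambda>x. f x $ j) \<in> borel_measurable M"
  shows "f \<in> borel_measurable M"
  unfolding borel_measurable_euclidean_space[of f]
  by (auto simp: Basis_vec_def cart_eq_inner_axis[symmetric] assms)

definition drop_coord :: "'n \<Rightarrow> real^'n \<Rightarrow> real^'n" where
  "drop_coord j v = (\<chi> j'. if j' = j then 0 else v $ j')"

lemma drop_coord_add_axis: "drop_coord j v + (v $ j) *\<^sub>R axis j 1 = v"
  by (auto simp: vec_eq_iff drop_coord_def axis_def)

lemma borel_measurable_drop_coord[measurable]: "drop_coord j \<in> borel_measurable borel"
  unfolding drop_coord_def by (rule borel_measurable_vecI) simp

locale gaussian_samples = prob_space M for M :: "'w measure" +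
  fixes n :: "nat \<Rightarrow> 'w \<Rightarrow> real^'d"
  assumes indep_coords: "indep_vars (\<lambda>_. borel) (\<lambda>(i, j) \<omega>. n i \<omega> $ j) UNIV"
    and distributed_coord: "\<And>i j. distributed M lborel (\<lambda>\<omega>. n i \<omega> $ j) (\<lambda>t. ennreal (std_normal_density t))"
begin

lemma measurable_coord[measurable]: "(\<lambda>\<omega>. n i \<omega> $ j) \<in> borel_measurable M"
  using distributed_measurable[OF distributed_coord[of i j]] by simp

lemma measurable_sample[measurable]: "n i \<in> borel_measurable M"
  by (rule borel_measurable_vecI) (rule measurable_coord)

lemma distr_coord: "distr M borel (\<lambda>\<omega>. n i \<omega> $ j) = density lborel (\<lambda>t. ennreal (std_normal_density t))"
proof -
  have "distr M borel (\<lambda>\<omega>. n i \<omega> $ j) = distr M lborel (\<lambda>\<omega>. n i \<omega> $ j)"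
    by (rule distr_cong) auto
  also have "\<dots> = density lborel (\<lambda>t. ennreal (std_normal_density t))"
    using distributed_distr_eq_density[OF distributed_coord[of i j]] .
  finally show ?thesis .
qed

lemma integrable_coord_iff:
  assumes "f \<in> borel_measurable borel"
  shows "integrable M (\<lambda>\<omega>. f (n i \<omega> $ j)) \<longleftrightarrow> integrable lborel (\<lambda>t. std_normal_density t * f t)"
  using assms integrable_distr_eq[of "\<lambda>\<omega>. n i \<omega> $ j" M borel f]
  by (simp add: distr_coord integrable_density)

lemma expectation_coord:
  assumes "f \<in> borel_measurable borel"
  shows "expectation (\<lambda>\<omega>. f (n i \<omega> $ j)) = (\<integral>t. std_normal_density t * f t \<partial>lborel)"
  using assms integral_distr[of "\<lambda>\<omega>. n i \<omega> $ j" M borel f]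
  by (simp add: distr_coord integral_density)

lemma integrable_abs_coord: "integrable M (\<lambda>\<omega>. \<bar>n i \<omega> $ j\<bar>)"
  using integrable_coord_iff[of "\<lambda>t. \<bar>t\<bar>" i j] integrable_std_normal_moment_abs[of 1] by simp

lemma integrable_square_coord: "integrable M (\<lambda>\<omega>. (n i \<omega> $ j)^2)"
  using integrable_coord_iff[of "\<lambda>t. t^2" i j] integrable_std_normal_moment[of 2] by simp

lemma integrable_coord_mult:
  assumes F: "F \<in> borel_measurable borel" and bound: "\<And>v. \<bar>F v\<bar> \<le> B"
  shows "integrable M (\<lambda>\<omega>. n i \<omega> $ j * F (n i \<omega>))"
proof (rule Bochner_Integration.integrable_bound[where f="\<lambda>\<omega>. B * \<bar>n i \<omega> $ j\<bar>"])
  show "AE \<omega> in M. norm (n i \<omega> $ j * F (n i \<omega>)) \<le> norm (B * \<bar>n i \<omega> $ j\<bar>)"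
  proof (intro AE_I2)
    fix \<omega>
    have "\<bar>F (n i \<omega>)\<bar> \<le> \<bar>B\<bar>"
      using bound[of "n i \<omega>"] by linarith
    then show "norm (n i \<omega> $ j * F (n i \<omega>)) \<le> norm (B * \<bar>n i \<omega> $ j\<bar>)"
      by (simp add: abs_mult mult_right_mono mult.commute)
  qed
qed (use F integrable_abs_coord in simp_all)

lemma indep_var_coord_blocks:
  assumes "A \<inter> B = {}"
    and "f \<in> borel_measurable (PiM A (\<lambda>_. borel))" and "g \<in> borel_measurable (PiM B (\<lambda>_. borel))"
  shows "indep_var borel (\<lambda>\<omega>. f (\<lambda>k\<in>A. n (fst k) \<omega> $ snd k)) borel (\<lambda>\<omega>. g (\<lambda>k\<in>B. n (fst k) \<omega> $ snd k))"
proof -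
  have "indep_var borel (f \<circ> (\<lambda>\<omega>. \<lambda>k\<in>A. (\<lambda>(i, j) \<omega>. n i \<omega> $ j) k \<omega>))
      borel (g \<circ> (\<lambda>\<omega>. \<lambda>k\<in>B. (\<lambda>(i, j) \<omega>. n i \<omega> $ j) k \<omega>))"
    using assms by (intro indep_var_compose[OF indep_var_restrict[OF indep_coords]]) auto
  then show ?thesis
    by (simp add: o_def case_prod_beta)
qed

lemma indep_var_samples:
  assumes "i \<noteq> i'"
  shows "indep_var borel (n i) borel (n i')"
proof -
  have meas: "(\<lambda>f. \<chi> j. f (k, j)) \<in> borel_measurable (PiM ({k} \<times> UNIV) (\<lambda>_. borel :: real measure))" for k
    by (intro borel_measurable_vecI measurable_component_singleton) auto
  have "{i} \<times> UNIV \<inter> {i'} \<times> UNIV = {}"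
    using assms by auto
  from indep_var_coord_blocks[OF this meas meas] show ?thesis
    by (simp add: restrict_def vec_eq_iff cong: if_cong)
qed

lemma indep_var_coord_drop_coord:
  "indep_var borel (\<lambda>\<omega>. (n i \<omega> $ j) *\<^sub>R axis j 1) borel (\<lambda>\<omega>. drop_coord j (n i \<omega>))"
proof -
  define B where "B = {(i, j') | j'. j' \<noteq> j}"
  have "(\<lambda>f. f (i, j)) \<in> borel_measurable (PiM {(i, j)} (\<lambda>_. borel :: real measure))"
    by (rule measurable_component_singleton) simp
  then have coord: "(\<lambda>f. f (i, j) *\<^sub>R (axis j 1 :: real^'d)) \<in> borel_measurable (PiM {(i, j)} (\<lambda>_. borel :: real measure))"
    by measurable
  have rest: "(\<lambda>f. \<chi> j'. if j' = j then 0 else f (i, j')) \<in> borel_measurable (PiM B (\<lambda>_. borel :: real measure))"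
  proof (rule borel_measurable_vecI)
    fix j' :: 'd
    show "(\<lambda>f. (\<chi> j'. if j' = j then 0 else f (i, j')) $ j') \<in> borel_measurable (PiM B (\<lambda>_. borel))"
      by (cases "j' = j") (auto simp: B_def intro!: measurable_component_singleton)
  qed
  have "{(i, j)} \<inter> B = {}"
    by (auto simp: B_def)
  from indep_var_coord_blocks[OF this coord rest] show ?thesis
    by (simp add: B_def drop_coord_def vec_eq_iff cong: if_cong)
qed

lemma distr_all_coords:
  "distr M (PiM UNIV (\<lambda>_. borel)) (\<lambda>\<omega>. \<lambda>k\<in>UNIV. n (fst k) \<omega> $ snd k) =
    PiM UNIV (\<lambda>_. density lborel (\<lambda>t. ennreal (std_normal_density t)))"
proof -
  have "distr M (PiM UNIV (\<lambda>_. borel)) (\<lambda>\<omega>. \<lambda>k\<in>UNIV. n (fst k) \<omega> $ snd k) =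
      PiM UNIV (\<lambda>k. distr M borel (\<lambda>\<omega>. n (fst k) \<omega> $ snd k))"
    using indep_coords by (subst indep_vars_iff_distr_eq_PiM[symmetric]) (auto simp: case_prod_beta')
  then show ?thesis
    by (simp add: distr_coord)
qed

lemma distr_sample_eq: "distr M borel (n i) = distr M borel (n 0)"
proof -
  define N where "N = density lborel (\<lambda>t. ennreal (std_normal_density t))"
  have prob_N: "prob_space N"
    unfolding N_def by (rule prob_space_normal_density) simp
  have sets_N: "sets N = sets borel"
    by (simp add: N_def)
  define T where "T \<omega> = (\<lambda>k\<in>UNIV. n (fst k) \<omega> $ snd k)" for \<omega>
  have T_meas: "T \<in> measurable M (PiM UNIV (\<lambda>_. borel))"
    unfolding T_def by (intro measurable_restrict) auto
  have distr_T: "distr M (PiM UNIV (\<lambda>_. borel)) T = PiM UNIV (\<lambda>_. N)"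
    unfolding T_def[abs_def] N_def by (rule distr_all_coords)
  define V where "V f = ((\<chi> j. f j) :: real^'d)" for f :: "'d \<Rightarrow> real"
  have V_meas: "V \<in> measurable (PiM UNIV (\<lambda>_. N)) borel"
  proof (unfold V_def, rule borel_measurable_vecI)
    fix j :: 'd
    have "(\<lambda>f. f j) \<in> measurable (PiM UNIV (\<lambda>_. N)) N"
      by (rule measurable_component_singleton) simp
    then show "(\<lambda>f. (\<chi> j. f j) $ j) \<in> borel_measurable (PiM UNIV (\<lambda>_. N))"
      by (simp add: measurable_cong_sets[OF refl sets_N])
  qed
  have sets_PiM: "sets (PiM UNIV (\<lambda>_::nat \<times> 'd. N)) = sets (PiM UNIV (\<lambda>_. borel))"
    by (rule sets_PiM_cong) (auto simp: sets_N)
  have "distr M borel (n i) = distr (PiM UNIV (\<lambda>_::'d. N)) borel V" for i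
  proof -
    define \<rho> where "\<rho> f = (\<lambda>j\<in>UNIV. f (i, j))" for f :: "nat \<times> 'd \<Rightarrow> real"
    have \<rho>_meas: "\<rho> \<in> measurable (PiM UNIV (\<lambda>_. N)) (PiM UNIV (\<lambda>_. N))"
      unfolding \<rho>_def by (intro measurable_restrict measurable_component_singleton) auto
    have "n i = V \<circ> \<rho> \<circ> T"
      by (auto simp: V_def \<rho>_def T_def vec_eq_iff)
    then have "distr M borel (n i) = distr (distr M (PiM UNIV (\<lambda>_. borel)) T) borel (V \<circ> \<rho>)"
      using T_meas \<rho>_meas V_meas by (simp add: distr_distr measurable_cong_sets[OF sets_PiM refl])
    also have "\<dots> = distr (distr (PiM UNIV (\<lambda>_. N)) (PiM UNIV (\<lambda>_. N)) \<rho>) borel V"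
      using \<rho>_meas V_meas by (simp add: distr_T distr_distr)
    also have "distr (PiM UNIV (\<lambda>_. N)) (PiM UNIV (\<lambda>_. N)) \<rho> = PiM UNIV (\<lambda>_::'d. N)"
      unfolding \<rho>_def using distr_PiM_reindex[of UNIV "\<lambda>_. N" "\<lambda>j. (i, j)" UNIV] prob_N
      by (auto simp: inj_on_def)
    finally show ?thesis .
  qed
  then show ?thesis
    by simp
qed

lemma expectation_sample_eq:
  fixes h :: "real^'d \<Rightarrow> real"
  assumes "h \<in> borel_measurable borel"
  shows "expectation (\<lambda>\<omega>. h (n i \<omega>)) = expectation (\<lambda>\<omega>. h (n 0 \<omega>))"
  using integral_distr[OF measurable_sample assms, of i] integral_distr[OF measurable_sample assms, of 0]
  by (simp add: distr_sample_eq[of i])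

lemma expectation_split_coord:
  fixes f :: "(real^'d) \<times> (real^'d) \<Rightarrow> real"
  assumes f: "f \<in> borel_measurable borel"
    and int: "integrable M (\<lambda>\<omega>. f ((n i \<omega> $ j) *\<^sub>R axis j 1, drop_coord j (n i \<omega>)))"
  shows "expectation (\<lambda>\<omega>. f ((n i \<omega> $ j) *\<^sub>R axis j 1, drop_coord j (n i \<omega>))) =
    (\<integral>w. (\<integral>t. std_normal_density t * f (t *\<^sub>R axis j 1, w) \<partial>lborel) \<partial>distr M borel (\<lambda>\<omega>. drop_coord j (n i \<omega>)))"
proof -
  define Z where "Z \<omega> = (n i \<omega> $ j) *\<^sub>R (axis j 1 :: real^'d)" for \<omega>
  define W where "W \<omega> = drop_coord j (n i \<omega>)" for \<omega>
  interpret Z: prob_space "distr M borel Z"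
    by (rule prob_space_distr) (simp add: Z_def[abs_def])
  interpret W: prob_space "distr M borel W"
    by (rule prob_space_distr) (simp add: W_def[abs_def])
  interpret ZW: pair_prob_space "distr M borel Z" "distr M borel W" ..
  have f_meas: "f \<in> borel_measurable (borel \<Otimes>\<^sub>M borel)"
    using f by (simp add: borel_prod)
  have ZW_meas: "(\<lambda>\<omega>. (Z \<omega>, W \<omega>)) \<in> measurable M (borel \<Otimes>\<^sub>M borel)"
    unfolding Z_def[abs_def] W_def[abs_def] by measurable
  have joint: "distr M borel Z \<Otimes>\<^sub>M distr M borel W = distr M (borel \<Otimes>\<^sub>M borel) (\<lambda>\<omega>. (Z \<omega>, W \<omega>))"
    using indep_var_distribution_eq[THEN iffD1, OF indep_var_coord_drop_coord[of i j]]
    by (simp add: Z_def[abs_def] W_def[abs_def])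
  have int_joint: "integrable (distr M borel Z \<Otimes>\<^sub>M distr M borel W) f"
    unfolding joint using integrable_distr_eq[OF ZW_meas f_meas] int by (simp add: Z_def W_def)
  have inner: "(\<integral>t. f (t, w) \<partial>distr M borel Z) = (\<integral>t. std_normal_density t * f (t *\<^sub>R axis j 1, w) \<partial>lborel)" for w
  proof -
    have "(\<integral>t. f (t, w) \<partial>distr M borel Z) = expectation (\<lambda>\<omega>. (\<lambda>t. f (t *\<^sub>R axis j 1, w)) (n i \<omega> $ j))"
      using f_meas by (subst integral_distr) (auto simp: Z_def[abs_def])
    also have "\<dots> = (\<integral>t. std_normal_density t * f (t *\<^sub>R axis j 1, w) \<partial>lborel)"
      by (rule expectation_coord) (use f_meas in measurable)
    finally show ?thesis .
  qed
  have "expectation (\<lambda>\<omega>. f (Z \<omega>, W \<omega>)) = integral\<^sup>L (distr M borel Z \<Otimes>\<^sub>M distr M borel W) f"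
    unfolding joint by (rule integral_distr[symmetric, OF ZW_meas f_meas])
  also have "\<dots> = (\<integral>w. (\<integral>t. f (t, w) \<partial>distr M borel Z) \<partial>distr M borel W)"
    using ZW.integral_snd[of "\<lambda>t w. f (t, w)"] int_joint by simp
  finally show ?thesis
    by (simp add: inner Z_def W_def[abs_def])
qed

lemma expectation_coord_mult_eq_deriv:
  fixes F :: "real^'d \<Rightarrow> real"
  assumes deriv: "\<And>v. (F has_derivative F' v) (at v)"
    and cont: "\<And>h. continuous_on UNIV (\<lambda>v. F' v h)"
    and bound: "\<And>v. \<bar>F v\<bar> \<le> B" and bound': "\<And>v. \<bar>F' v (axis j 1)\<bar> \<le> B"
  shows "expectation (\<lambda>\<omega>. n i \<omega> $ j * F (n i \<omega>)) = expectation (\<lambda>\<omega>. F' (n i \<omega>) (axis j 1))"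
proof -
  define e :: "real^'d" where "e = axis j 1"
  have F_cont: "continuous_on UNIV F"
    by (intro continuous_at_imp_continuous_on ballI has_derivative_continuous[OF deriv])
  define f where "f p = fst p $ j * F (snd p + fst p)" for p :: "(real^'d) \<times> (real^'d)"
  define f' where "f' p = F' (snd p + fst p) e" for p :: "(real^'d) \<times> (real^'d)"
  have f_meas: "f \<in> borel_measurable borel" and f'_meas: "f' \<in> borel_measurable borel"
    unfolding f_def[abs_def] f'_def[abs_def]
    by (auto intro!: borel_measurable_continuous_onI continuous_intros
        continuous_on_compose2[OF F_cont] continuous_on_compose2[OF cont])
  have e_coord: "e $ j = 1"
    by (simp add: e_def)
  have split: "drop_coord j (n i \<omega>) + (n i \<omega> $ j) *\<^sub>R e = n i \<omega>" for \<omega>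
    unfolding e_def by (rule drop_coord_add_axis)
  have f_eq: "n i \<omega> $ j * F (n i \<omega>) = f ((n i \<omega> $ j) *\<^sub>R e, drop_coord j (n i \<omega>))"
    and f'_eq: "F' (n i \<omega>) e = f' ((n i \<omega> $ j) *\<^sub>R e, drop_coord j (n i \<omega>))" for \<omega>
    by (simp_all add: f_def f'_def split e_coord)
  have f_int: "integrable M (\<lambda>\<omega>. n i \<omega> $ j * F (n i \<omega>))"
    using borel_measurable_continuous_onI[OF F_cont] bound by (rule integrable_coord_mult)
  have f'_int: "integrable M (\<lambda>\<omega>. F' (n i \<omega>) e)"
  proof (rule integrable_const_bound[where B=B])
    show "AE \<omega> in M. norm (F' (n i \<omega>) e) \<le> B"
      using bound' by (simp add: e_def)
    show "(\<lambda>\<omega>. F' (n i \<omega>) e) \<in> borel_measurable M"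
      using borel_measurable_continuous_onI[OF cont] by measurable
  qed
  have "(\<integral>t. std_normal_density t * f (t *\<^sub>R e, w) \<partial>lborel) =
      (\<integral>t. std_normal_density t * f' (t *\<^sub>R e, w) \<partial>lborel)" for w
    using std_normal_stein_identity_along_line[OF deriv cont bound, of e w] bound'
    by (simp add: f_def f'_def e_def add.commute)
  then have "expectation (\<lambda>\<omega>. f ((n i \<omega> $ j) *\<^sub>R e, drop_coord j (n i \<omega>))) =
      expectation (\<lambda>\<omega>. f' ((n i \<omega> $ j) *\<^sub>R e, drop_coord j (n i \<omega>)))"
    using f_int f'_int unfolding f_eq f'_eq unfolding e_def
    by (simp add: expectation_split_coord[OF f_meas] expectation_split_coord[OF f'_meas])
  then show ?thesis
    by (simp only: f_eq f'_eq[symmetric]) (simp add: e_def)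
qed

lemma expectation_inner_mult_eq_deriv:
  fixes F :: "real^'d \<Rightarrow> real"
  assumes deriv: "\<And>v. (F has_derivative F' v) (at v)"
    and cont: "\<And>h. continuous_on UNIV (\<lambda>v. F' v h)"
    and bound: "\<And>v. \<bar>F v\<bar> \<le> B" and bound': "\<And>v j. \<bar>F' v (axis j 1)\<bar> \<le> B"
  shows "expectation (\<lambda>\<omega>. (n i \<omega> \<bullet> u) * F (n i \<omega>)) = expectation (\<lambda>\<omega>. F' (n i \<omega>) u)"
proof -
  have F_meas: "F \<in> borel_measurable borel"
    by (intro borel_measurable_continuous_onI continuous_at_imp_continuous_on ballI
        has_derivative_continuous[OF deriv])
  have int': "integrable M (\<lambda>\<omega>. F' (n i \<omega>) (axis j 1))" for j
    using bound' borel_measurable_continuous_onI[OF cont]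
    by (intro integrable_const_bound[where B=B]) auto
  have "expectation (\<lambda>\<omega>. (n i \<omega> \<bullet> u) * F (n i \<omega>)) =
      expectation (\<lambda>\<omega>. \<Sum>j\<in>UNIV. u $ j * (n i \<omega> $ j * F (n i \<omega>)))"
    by (rule Bochner_Integration.integral_cong) (auto simp: inner_vec_def sum_distrib_left ac_simps)
  also have "\<dots> = (\<Sum>j\<in>UNIV. u $ j * expectation (\<lambda>\<omega>. F' (n i \<omega>) (axis j 1)))"
    using integrable_coord_mult[OF F_meas bound]
    by (simp add: expectation_coord_mult_eq_deriv[OF deriv cont bound bound'])
  also have "\<dots> = expectation (\<lambda>\<omega>. \<Sum>j\<in>UNIV. u $ j * F' (n i \<omega>) (axis j 1))"
    using int' by simp
  also have "\<dots> = expectation (\<lambda>\<omega>. F' (n i \<omega>) u)"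
    by (rule Bochner_Integration.integral_cong[OF refl])
      (rule linear_eq_sum_axis[OF has_derivative_linear[OF deriv], symmetric])
  finally show ?thesis .
qed

end

section \<open>Softmax weights and their zero-temperature limit\<close>

definition softmax :: "nat \<Rightarrow> (nat \<Rightarrow> 'a::real_inner) \<Rightarrow> (nat \<Rightarrow> real) \<Rightarrow> nat \<Rightarrow> 'a \<Rightarrow> real" where
  "softmax L y c l v = exp (v \<bullet> y l + c l) / (\<Sum>r<L. exp (v \<bullet> y r + c r))"

definition softmax_deriv :: "nat \<Rightarrow> (nat \<Rightarrow> 'a::real_inner) \<Rightarrow> (nat \<Rightarrow> real) \<Rightarrow> nat \<Rightarrow> 'a \<Rightarrow> 'a \<Rightarrow> real" where
  "softmax_deriv L y c l v h = softmax L y c l v * (h \<bullet> y l - (\<Sum>r<L. softmax L y c r v * (h \<bullet> y r)))"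

lemma softmax_denominator_pos: "0 < (L::nat) \<Longrightarrow> 0 < (\<Sum>r<L. exp (v \<bullet> y r + c r))"
  by (intro sum_pos) auto

lemma softmax_nonneg: "0 \<le> softmax L y c l v"
  unfolding softmax_def by (intro divide_nonneg_nonneg sum_nonneg) auto

lemma softmax_le_1: "l < L \<Longrightarrow> softmax L y c l v \<le> 1"
  unfolding softmax_def by (subst divide_le_eq_1) (auto intro!: member_le_sum softmax_denominator_pos)

lemma abs_softmax_le_1: "l < L \<Longrightarrow> \<bar>softmax L y c l v\<bar> \<le> 1"
  using softmax_nonneg softmax_le_1 by (metis abs_of_nonneg)

lemma softmax_has_derivative:
  assumes L: "0 < L"
  shows "(softmax L y c l has_derivative softmax_deriv L y c l v) (at v)"
proof -
  define D where "D v = (\<Sum>r<L. exp (v \<bullet> y r + c r))" for v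
  have D_pos: "0 < D v" for v
    unfolding D_def using softmax_denominator_pos[OF L] .
  have numerator: "((\<lambda>v. exp (v \<bullet> y l + c l)) has_derivative (\<lambda>h. exp (v \<bullet> y l + c l) * (h \<bullet> y l))) (at v)"
    by (auto intro!: derivative_eq_intros simp: inner_commute)
  have denominator: "(D has_derivative (\<lambda>h. \<Sum>r<L. exp (v \<bullet> y r + c r) * (h \<bullet> y r))) (at v)"
    unfolding D_def by (auto intro!: derivative_eq_intros simp: inner_commute mult.commute)
  have "((\<lambda>v. exp (v \<bullet> y l + c l) / D v) has_derivative
     (\<lambda>h. - exp (v \<bullet> y l + c l) * (inverse (D v) * (\<Sum>r<L. exp (v \<bullet> y r + c r) * (h \<bullet> y r)) * inverse (D v))
          + exp (v \<bullet> y l + c l) * (h \<bullet> y l) / D v)) (at v)"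
    using D_pos[of v] by (intro has_derivative_divide[OF numerator denominator]) simp
  moreover have "(\<lambda>h. - exp (v \<bullet> y l + c l) * (inverse (D v) * (\<Sum>r<L. exp (v \<bullet> y r + c r) * (h \<bullet> y r)) * inverse (D v))
          + exp (v \<bullet> y l + c l) * (h \<bullet> y l) / D v) = softmax_deriv L y c l v"
  proof
    fix h
    have "(\<Sum>r<L. softmax L y c r v * (h \<bullet> y r)) = (\<Sum>r<L. exp (v \<bullet> y r + c r) * (h \<bullet> y r)) / D v"
      unfolding softmax_def D_def[symmetric] by (simp add: sum_divide_distrib)
    moreover have "softmax L y c l v = exp (v \<bullet> y l + c l) / D v"
      by (simp add: softmax_def D_def)
    ultimately show "- exp (v \<bullet> y l + c l) * (inverse (D v) * (\<Sum>r<L. exp (v \<bullet> y r + c r) * (h \<bullet> y r)) * inverse (D v))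
          + exp (v \<bullet> y l + c l) * (h \<bullet> y l) / D v = softmax_deriv L y c l v h"
      unfolding softmax_deriv_def by (simp add: divide_inverse algebra_simps)
  qed
  ultimately show ?thesis
    unfolding softmax_def[abs_def] D_def by simp
qed

lemma continuous_on_softmax:
  assumes "0 < L"
  shows "continuous_on UNIV (softmax L y c l)"
proof -
  have "(\<Sum>r<L. exp (v \<bullet> y r + c r)) \<noteq> 0" for v
    using softmax_denominator_pos[OF assms, of v y c] by simp
  then show ?thesis
    unfolding softmax_def[abs_def] by (intro continuous_intros) auto
qed

lemma continuous_on_softmax_deriv: "0 < L \<Longrightarrow> continuous_on UNIV (\<lambda>v. softmax_deriv L y c l v h)"
  unfolding softmax_deriv_def by (intro continuous_intros continuous_on_softmax[unfolded comp_def])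

lemma abs_softmax_deriv_le:
  assumes "l < L"
  shows "\<bar>softmax_deriv L y c l v h\<bar> \<le> \<bar>h \<bullet> y l\<bar> + (\<Sum>r<L. \<bar>h \<bullet> y r\<bar>)"
proof -
  have "\<bar>\<Sum>r<L. softmax L y c r v * (h \<bullet> y r)\<bar> \<le> (\<Sum>r<L. \<bar>softmax L y c r v * (h \<bullet> y r)\<bar>)"
    by (rule sum_abs)
  also have "\<dots> \<le> (\<Sum>r<L. \<bar>h \<bullet> y r\<bar>)"
    by (intro sum_mono) (simp add: abs_mult mult_left_le_one_le abs_softmax_le_1)
  finally have "\<bar>h \<bullet> y l - (\<Sum>r<L. softmax L y c r v * (h \<bullet> y r))\<bar> \<le> \<bar>h \<bullet> y l\<bar> + (\<Sum>r<L. \<bar>h \<bullet> y r\<bar>)"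
    by linarith
  moreover have "\<bar>softmax L y c l v\<bar> * \<bar>h \<bullet> y l - (\<Sum>r<L. softmax L y c r v * (h \<bullet> y r))\<bar>
      \<le> \<bar>h \<bullet> y l - (\<Sum>r<L. softmax L y c r v * (h \<bullet> y r))\<bar>"
    by (rule mult_left_le_one_le) (simp_all add: abs_softmax_le_1[OF assms])
  ultimately show ?thesis
    unfolding softmax_deriv_def abs_mult by linarith
qed

lemma softmax_deriv_eq_0: "(\<And>r. r < L \<Longrightarrow> u \<bullet> y r = 0) \<Longrightarrow> l < L \<Longrightarrow> softmax_deriv L y c l v u = 0"
  unfolding softmax_deriv_def by simp

lemma (in gaussian_samples) expectation_inner_mult_softmax_eq_0:
  assumes l: "l < L" and orth: "\<And>r. r < L \<Longrightarrow> u \<bullet> y r = 0"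
  shows "expectation (\<lambda>\<omega>. (n i \<omega> \<bullet> u) * softmax L y c l (n i \<omega>)) = 0"
proof -
  define K where "K = (\<Sum>j\<in>UNIV. \<bar>axis j 1 \<bullet> y l\<bar> + (\<Sum>r<L. \<bar>axis j 1 \<bullet> y r\<bar>))"
  have K_bound: "\<bar>softmax_deriv L y c l v (axis j 1)\<bar> \<le> K" for v j
  proof -
    have "\<bar>softmax_deriv L y c l v (axis j 1)\<bar> \<le> \<bar>axis j 1 \<bullet> y l\<bar> + (\<Sum>r<L. \<bar>axis j 1 \<bullet> y r\<bar>)"
      by (rule abs_softmax_deriv_le[OF l])
    also have "\<dots> \<le> K"
      unfolding K_def by (rule member_le_sum) (auto intro: sum_nonneg)
    finally show ?thesis .
  qed
  have "0 \<le> K"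
    unfolding K_def by (auto intro: sum_nonneg)
  then have "\<bar>softmax L y c l v\<bar> \<le> 1 + K" and "\<bar>softmax_deriv L y c l v (axis j 1)\<bar> \<le> 1 + K" for v j
    using abs_softmax_le_1[OF l, of y c v] K_bound[of v j] by linarith+
  then have "expectation (\<lambda>\<omega>. (n i \<omega> \<bullet> u) * softmax L y c l (n i \<omega>)) =
      expectation (\<lambda>\<omega>. softmax_deriv L y c l (n i \<omega>) u)"
    using l by (intro expectation_inner_mult_eq_deriv[where B="1 + K"] softmax_has_derivative
        continuous_on_softmax_deriv) auto
  also have "\<dots> = 0"
    using softmax_deriv_eq_0[OF orth l] by simp
  finally show ?thesis .
qed

lemma hard_assign_least_argmax:
  fixes x :: "nat \<Rightarrow> real^'d"
  assumes L: "0 < L"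
  shows "hard_assign x L v < L"
    and "\<And>r. r < L \<Longrightarrow> v \<bullet> x r \<le> v \<bullet> x (hard_assign x L v)"
    and "\<And>r. r < L \<Longrightarrow> v \<bullet> x (hard_assign x L v) \<le> v \<bullet> x r \<Longrightarrow> hard_assign x L v \<le> r"
proof -
  define P where "P l = (l < L \<and> (\<forall>r<L. v \<bullet> x r \<le> v \<bullet> x l))" for l
  have "Max ((\<lambda>r. v \<bullet> x r) ` {..<L}) \<in> (\<lambda>r. v \<bullet> x r) ` {..<L}"
    using L by (intro Max_in) auto
  then obtain m where "m < L" "v \<bullet> x m = Max ((\<lambda>r. v \<bullet> x r) ` {..<L})"
    by auto
  then have "P m"
    unfolding P_def by (auto intro: Max_ge)
  then have P_hard: "P (hard_assign x L v)"
    unfolding hard_assign_def P_def[symmetric] by (rule LeastI)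
  then show "hard_assign x L v < L" "\<And>r. r < L \<Longrightarrow> v \<bullet> x r \<le> v \<bullet> x (hard_assign x L v)"
    unfolding P_def by auto
  fix r assume "r < L" "v \<bullet> x (hard_assign x L v) \<le> v \<bullet> x r"
  with P_hard have "P r"
    unfolding P_def by force
  then show "hard_assign x L v \<le> r"
    unfolding hard_assign_def P_def[symmetric] by (rule Least_le)
qed

lemma exp_linear_sqrt_LIMSEQ_0:
  assumes "a < 0 \<or> (a = 0 \<and> b < 0)"
  shows "(\<lambda>k::nat. exp (real k * a + sqrt (real k) * b)) \<longlonglongrightarrow> 0"
  using assms by (elim disjE conjE) (simp_all, real_asymp+)

lemma exp_linear_sqrt_at_top:
  assumes "0 < a \<or> (a = 0 \<and> 0 < b)"
  shows "filterlim (\<lambda>k::nat. exp (real k * a + sqrt (real k) * b)) at_top sequentially"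
  using assms by (elim disjE conjE) (simp_all, real_asymp+)

lemma LIMSEQ_inverse_sum_exp_gaps:
  fixes z :: "nat \<Rightarrow> real"
  assumes l: "l < L" and m: "m < L" "\<And>r. r < L \<Longrightarrow> z r \<le> z m" "\<And>r. r < L \<Longrightarrow> z m \<le> z r \<Longrightarrow> m \<le> r"
  defines "T r k \<equiv> exp (real k * (z r - z l) + sqrt (real k) * (real l - real r))"
  shows "(\<lambda>k. 1 / (\<Sum>r<L. T r k)) \<longlonglongrightarrow> of_bool (m = l)"
proof (cases "m = l")
  case True
  have "(\<lambda>k. T r k) \<longlonglongrightarrow> of_bool (r = l)" if "r < L" for r
  proof (cases "r = l")
    case False
    have "z r \<le> z l"
      using m(2)[OF that] True by simp
    moreover have "z r = z l \<Longrightarrow> l < r"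
      using m(3)[OF that] True False by force
    ultimately have "z r - z l < 0 \<or> (z r - z l = 0 \<and> real l - real r < 0)"
      by fastforce
    then show ?thesis
      using False exp_linear_sqrt_LIMSEQ_0 by (simp add: T_def)
  qed (simp add: T_def)
  then have "(\<lambda>k. \<Sum>r<L. T r k) \<longlonglongrightarrow> (\<Sum>r<L. of_bool (r = l))"
    by (intro tendsto_sum) simp
  then have "(\<lambda>k. 1 / (\<Sum>r<L. T r k)) \<longlonglongrightarrow> 1 / 1"
    using l by (intro tendsto_divide tendsto_const) auto
  then show ?thesis
    using True by simp
next
  case False
  have "z l \<le> z m"
    using m(2)[OF l] .
  moreover have "z m = z l \<Longrightarrow> m < l"
    using m(3)[OF l] False by force
  ultimately have "0 < z m - z l \<or> (z m - z l = 0 \<and> 0 < real l - real m)"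
    by fastforce
  then have "filterlim (T m) at_top sequentially"
    unfolding T_def by (rule exp_linear_sqrt_at_top)
  moreover have "T m k \<le> (\<Sum>r<L. T r k)" for k
    using m(1) by (intro member_le_sum) (auto simp: T_def)
  ultimately have "filterlim (\<lambda>k. \<Sum>r<L. T r k) at_top sequentially"
    by (auto intro: filterlim_at_top_mono)
  then show ?thesis
    using False tendsto_inverse_0_at_top by (simp add: divide_inverse)
qed

text \<open>Scaling the templates by k turns the softmax into the indicator of the maximisers; the
  offsets \<open>-sqrt k * r\<close>, negligible against k times any gap of inner products, break ties towards
  the least index, as \<^const>\<open>hard_assign\<close> does.\<close>

lemma softmax_tendsto_hard_assign:
  fixes x :: "nat \<Rightarrow> real^'d"
  assumes l: "l < L"
  shows "(\<lambda>k::nat. softmax L (\<lambda>r. real k *\<^sub>R x r) (\<lambda>r. - sqrt (real k) * real r) l v)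
          \<longlonglongrightarrow> of_bool (hard_assign x L v = l)"
proof -
  define z where "z r = v \<bullet> x r" for r
  define T where "T r k = exp (real k * (z r - z l) + sqrt (real k) * (real l - real r))" for r and k :: nat
  have "T r k = exp (v \<bullet> (real k *\<^sub>R x r) + - sqrt (real k) * real r) /
      exp (v \<bullet> (real k *\<^sub>R x l) + - sqrt (real k) * real l)" for r k
    unfolding T_def z_def exp_diff[symmetric] by (simp add: algebra_simps)
  then have "softmax L (\<lambda>r. real k *\<^sub>R x r) (\<lambda>r. - sqrt (real k) * real r) l v = 1 / (\<Sum>r<L. T r k)" for k
    by (simp add: softmax_def sum_divide_distrib[symmetric])
  moreover have "(\<lambda>k. 1 / (\<Sum>r<L. T r k)) \<longlonglongrightarrow> of_bool (hard_assign x L v = l)"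
    unfolding T_def using l hard_assign_least_argmax[where x=x and v=v]
    by (intro LIMSEQ_inverse_sum_exp_gaps) (auto simp: z_def)
  ultimately show ?thesis
    by simp
qed

lemma borel_measurable_hard_assign_indicator:
  fixes x :: "nat \<Rightarrow> real^'d"
  assumes "l < L"
  shows "(\<lambda>v. of_bool (hard_assign x L v = l) :: real) \<in> borel_measurable borel"
  using assms
  by (intro borel_measurable_LIMSEQ_real[OF softmax_tendsto_hard_assign[OF assms]]
      borel_measurable_continuous_onI continuous_on_softmax) simp

lemma (in gaussian_samples) expectation_inner_mult_hard_assign_eq_0:
  fixes x :: "nat \<Rightarrow> real^'d"
  assumes l: "l < L" and orth: "\<And>r. r < L \<Longrightarrow> u \<bullet> x r = 0"
  shows "expectation (\<lambda>\<omega>. (n i \<omega> \<bullet> u) * of_bool (hard_assign x L (n i \<omega>) = l)) = 0"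
proof -
  define S where "S k = softmax L (\<lambda>r. real k *\<^sub>R x r) (\<lambda>r. - sqrt (real k) * real r) l" for k :: nat
  have [measurable]: "S k \<in> borel_measurable borel" for k
    unfolding S_def using l by (intro borel_measurable_continuous_onI continuous_on_softmax) simp
  note [measurable] = borel_measurable_hard_assign_indicator[OF l, where x=x]
  have dominating: "integrable M (\<lambda>\<omega>. \<bar>n i \<omega> \<bullet> u\<bar>)"
  proof (rule Bochner_Integration.integrable_bound[where f="\<lambda>\<omega>. \<Sum>j\<in>UNIV. \<bar>u $ j\<bar> * \<bar>n i \<omega> $ j\<bar>"])
    show "AE \<omega> in M. norm \<bar>n i \<omega> \<bullet> u\<bar> \<le> norm (\<Sum>j\<in>UNIV. \<bar>u $ j\<bar> * \<bar>n i \<omega> $ j\<bar>)"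
      by (intro AE_I2) (simp add: inner_vec_def sum_nonneg abs_mult mult.commute
          order_trans[OF sum_abs])
  qed (use integrable_abs_coord in simp_all)
  have "(\<lambda>k. expectation (\<lambda>\<omega>. (n i \<omega> \<bullet> u) * S k (n i \<omega>))) \<longlonglongrightarrow>
      expectation (\<lambda>\<omega>. (n i \<omega> \<bullet> u) * of_bool (hard_assign x L (n i \<omega>) = l))"
  proof (rule integral_dominated_convergence[OF _ _ dominating])
    show "AE \<omega> in M. (\<lambda>k. (n i \<omega> \<bullet> u) * S k (n i \<omega>)) \<longlonglongrightarrow>
        (n i \<omega> \<bullet> u) * of_bool (hard_assign x L (n i \<omega>) = l)"
      unfolding S_def by (intro AE_I2 tendsto_mult tendsto_const softmax_tendsto_hard_assign[OF l])
    show "AE \<omega> in M. norm ((n i \<omega> \<bullet> u) * S k (n i \<omega>)) \<le> \<bar>n i \<omega> \<bullet> u\<bar>" for k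
      unfolding S_def by (intro AE_I2) (simp add: abs_mult mult_left_le[OF abs_softmax_le_1[OF l]])
  qed measurable
  moreover have "expectation (\<lambda>\<omega>. (n i \<omega> \<bullet> u) * S k (n i \<omega>)) = 0" for k
    unfolding S_def using l orth by (intro expectation_inner_mult_softmax_eq_0) auto
  ultimately show ?thesis
    using LIMSEQ_unique[OF tendsto_const, of 0] by simp
qed

section \<open>Weighted means of the samples\<close>

definition weighted_mean :: "('a \<Rightarrow> real) \<Rightarrow> (nat \<Rightarrow> 'a::real_vector) \<Rightarrow> nat \<Rightarrow> 'a" where
  "weighted_mean G v m = (1 / (\<Sum>i<m. G (v i))) *\<^sub>R (\<Sum>i<m. G (v i) *\<^sub>R v i)"

lemma hard_est_eq_weighted_mean:
  "hard_est x L ns m l = weighted_mean (\<lambda>v. of_bool (hard_assign x L v = l)) ns m"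
proof -
  have "real (card {i\<in>{..<m}. hard_assign x L (ns i) = l}) = (\<Sum>i\<in>{i\<in>{..<m}. hard_assign x L (ns i) = l}. 1)"
    by simp
  also have "\<dots> = (\<Sum>i<m. of_bool (hard_assign x L (ns i) = l))"
    by (simp only: sum.inter_filter[OF finite_lessThan] of_bool_def)
  moreover have "(\<Sum>i\<in>{i\<in>{..<m}. hard_assign x L (ns i) = l}. ns i) =
      (\<Sum>i<m. of_bool (hard_assign x L (ns i) = l) *\<^sub>R ns i)"
    by (subst sum.inter_filter) (auto intro!: sum.cong)
  ultimately show ?thesis
    by (simp add: hard_est_def weighted_mean_def)
qed

lemma soft_est_eq_weighted_mean: "soft_est x L ns m l = weighted_mean (\<lambda>v. soft_weight x L v l) ns m"
  by (simp add: soft_est_def weighted_mean_def)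

lemma soft_weight_eq_softmax: "soft_weight x L v l = softmax L x (\<lambda>_. 0) l v"
  by (simp add: soft_weight_def softmax_def)

lemma tendsto_weighted_mean:
  fixes v :: "nat \<Rightarrow> 'a::real_normed_vector"
  assumes weights: "(\<lambda>m. (\<Sum>i<m. G (v i)) / real m) \<longlonglongrightarrow> p" and "p \<noteq> 0"
    and weighted_sums: "(\<lambda>m. (1 / real m) *\<^sub>R (\<Sum>i<m. G (v i) *\<^sub>R v i)) \<longlonglongrightarrow> V"
  shows "weighted_mean G v \<longlonglongrightarrow> (1 / p) *\<^sub>R V"
proof (rule Lim_transform_eventually)
  show "(\<lambda>m. (1 / ((\<Sum>i<m. G (v i)) / real m)) *\<^sub>R ((1 / real m) *\<^sub>R (\<Sum>i<m. G (v i) *\<^sub>R v i)))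
      \<longlonglongrightarrow> (1 / p) *\<^sub>R V"
    using assms by (intro tendsto_scaleR tendsto_divide tendsto_const)
  show "\<forall>\<^sub>F m in sequentially. (1 / ((\<Sum>i<m. G (v i)) / real m)) *\<^sub>R ((1 / real m) *\<^sub>R (\<Sum>i<m. G (v i) *\<^sub>R v i))
      = weighted_mean G v m"
    by (intro eventually_sequentiallyI[of 1]) (simp add: weighted_mean_def)
qed

lemma ex_lincomb_if_in_span_image:
  fixes x :: "nat \<Rightarrow> 'a::real_vector"
  assumes "w \<in> span (x ` {..<L})"
  shows "\<exists>\<alpha>. w = (\<Sum>k<L. \<alpha> k *\<^sub>R x k)"
  using assms
proof (induction L arbitrary: w)
  case (Suc L)
  from Suc.prems obtain c where "w - c *\<^sub>R x L \<in> span (x ` {..<L})"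
    by (auto simp: lessThan_Suc span_insert)
  with Suc.IH obtain \<alpha> where "w - c *\<^sub>R x L = (\<Sum>k<L. \<alpha> k *\<^sub>R x k)"
    by blast
  then have "w = (\<Sum>k<Suc L. (\<alpha>(L := c)) k *\<^sub>R x k)"
    by (simp add: algebra_simps)
  then show ?case
    by blast
qed simp

lemma ex_lincomb_if_orthogonal_to_complement:
  fixes x :: "nat \<Rightarrow> 'a::euclidean_space"
  assumes orth: "\<And>u. (\<And>r. r < L \<Longrightarrow> u \<bullet> x r = 0) \<Longrightarrow> v \<bullet> u = 0"
  shows "\<exists>\<alpha>. v = (\<Sum>k<L. \<alpha> k *\<^sub>R x k)"
proof -
  obtain y z where y: "y \<in> span (x ` {..<L})" and z: "\<And>w. w \<in> span (x ` {..<L}) \<Longrightarrow> orthogonal z w"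
    and v: "v = y + z"
    using orthogonal_subspace_decomp_exists[of "x ` {..<L}" v] by blast
  have "z \<bullet> x r = 0" if "r < L" for r
    using z[of "x r"] that by (auto simp: orthogonal_def span_base)
  then have "v \<bullet> z = 0"
    by (rule orth)
  moreover have "y \<bullet> z = 0"
    using z[OF y] by (simp add: orthogonal_def inner_commute)
  ultimately have "z = 0"
    by (simp add: v inner_add_left)
  then show ?thesis
    using ex_lincomb_if_in_span_image[OF y] v by simp
qed

context gaussian_samples
begin

lemma integrable_sample_fun:
  fixes h :: "real^'d \<Rightarrow> real"
  assumes h: "h \<in> borel_measurable borel" and growth: "\<And>v. \<bar>h v\<bar> \<le> \<bar>v $ j\<bar> + 1"
  shows "integrable M (\<lambda>\<omega>. h (n i \<omega>))" and "integrable M (\<lambda>\<omega>. (h (n i \<omega>))^2)"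
proof -
  show "integrable M (\<lambda>\<omega>. h (n i \<omega>))"
  proof (rule Bochner_Integration.integrable_bound[where f="\<lambda>\<omega>. \<bar>n i \<omega> $ j\<bar> + 1"])
    show "integrable M (\<lambda>\<omega>. \<bar>n i \<omega> $ j\<bar> + 1)"
      using integrable_abs_coord by simp
    show "(\<lambda>\<omega>. h (n i \<omega>)) \<in> borel_measurable M"
      using h by measurable
    show "AE \<omega> in M. norm (h (n i \<omega>)) \<le> norm (\<bar>n i \<omega> $ j\<bar> + 1)"
      using growth by (intro AE_I2) (simp add: order_trans[OF _ abs_ge_self])
  qed
  show "integrable M (\<lambda>\<omega>. (h (n i \<omega>))^2)"
  proof (rule Bochner_Integration.integrable_bound[where f="\<lambda>\<omega>. 2 * (n i \<omega> $ j)^2 + 2"])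
    show "integrable M (\<lambda>\<omega>. 2 * (n i \<omega> $ j)^2 + 2)"
      using integrable_square_coord by simp
    show "(\<lambda>\<omega>. (h (n i \<omega>))^2) \<in> borel_measurable M"
      using h by measurable
    have "(h v)^2 \<le> 2 * (v $ j)^2 + 2" for v
    proof -
      have "(h v)^2 \<le> (\<bar>v $ j\<bar> + 1)^2"
        using power_mono[OF growth[of v] abs_ge_zero, of 2] by simp
      also have "\<dots> \<le> 2 * (v $ j)^2 + 2"
        using sum_squares_bound[of "\<bar>v $ j\<bar>" 1] by (simp add: power2_eq_square algebra_simps)
      finally show ?thesis .
    qed
    then show "AE \<omega> in M. norm ((h (n i \<omega>))^2) \<le> norm (2 * (n i \<omega> $ j)^2 + 2)"
      by (intro AE_I2) simp
  qed
qed

lemma strong_law_sample_nonneg: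
  fixes h :: "real^'d \<Rightarrow> real"
  assumes h: "h \<in> borel_measurable borel" and growth: "\<And>v. \<bar>h v\<bar> \<le> \<bar>v $ j\<bar> + 1"
    and nonneg: "\<And>v. 0 \<le> h v"
  shows "AE \<omega> in M. (\<lambda>m. (\<Sum>i<m. h (n i \<omega>)) / real m) \<longlonglongrightarrow> expectation (\<lambda>\<omega>. h (n 0 \<omega>))"
proof (rule strong_law_nonneg[where X="\<lambda>i \<omega>. h (n i \<omega>)"])
  show "expectation (\<lambda>\<omega>. (h (n i \<omega>))^2) \<le> expectation (\<lambda>\<omega>. (h (n 0 \<omega>))^2)" for i
    using expectation_sample_eq[of "\<lambda>v. (h v)^2" i] h by simp
  show "indep_var borel (\<lambda>\<omega>. h (n i \<omega>)) borel (\<lambda>\<omega>. h (n i' \<omega>))" if "i \<noteq> i'" for i i'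
    using indep_var_compose[OF indep_var_samples[OF that] h h] by (simp add: o_def)
  show "expectation (\<lambda>\<omega>. h (n i \<omega>)) = expectation (\<lambda>\<omega>. h (n 0 \<omega>))" for i
    by (rule expectation_sample_eq[OF h])
qed (use h nonneg integrable_sample_fun(2)[OF h growth] in simp_all)

lemma strong_law_sample:
  fixes h :: "real^'d \<Rightarrow> real"
  assumes h: "h \<in> borel_measurable borel" and growth: "\<And>v. \<bar>h v\<bar> \<le> \<bar>v $ j\<bar> + 1"
  shows "AE \<omega> in M. (\<lambda>m. (\<Sum>i<m. h (n i \<omega>)) / real m) \<longlonglongrightarrow> expectation (\<lambda>\<omega>. h (n 0 \<omega>))"
proof -
  define h\<^sub>p where "h\<^sub>p v = max 0 (h v)" for v
  define h\<^sub>n where "h\<^sub>n v = max 0 (- h v)" for v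
  have meas: "h\<^sub>p \<in> borel_measurable borel" "h\<^sub>n \<in> borel_measurable borel"
    unfolding h\<^sub>p_def[abs_def] h\<^sub>n_def[abs_def] using h by measurable
  have growth': "\<bar>h\<^sub>p v\<bar> \<le> \<bar>v $ j\<bar> + 1" "\<bar>h\<^sub>n v\<bar> \<le> \<bar>v $ j\<bar> + 1" for v
    using growth[of v] by (simp_all add: h\<^sub>p_def h\<^sub>n_def)
  have split: "h v = h\<^sub>p v - h\<^sub>n v" for v
    by (simp add: h\<^sub>p_def h\<^sub>n_def)
  have mean: "expectation (\<lambda>\<omega>. h (n 0 \<omega>)) = expectation (\<lambda>\<omega>. h\<^sub>p (n 0 \<omega>)) - expectation (\<lambda>\<omega>. h\<^sub>n (n 0 \<omega>))"
    unfolding split using integrable_sample_fun(1)[OF meas(1) growth'(1)] integrable_sample_fun(1)[OF meas(2) growth'(2)]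
    by simp
  have average: "(\<Sum>i<m. h (n i \<omega>)) / real m = (\<Sum>i<m. h\<^sub>p (n i \<omega>)) / real m - (\<Sum>i<m. h\<^sub>n (n i \<omega>)) / real m" for m \<omega>
    unfolding split by (simp add: sum_subtractf diff_divide_distrib)
  have "AE \<omega> in M. (\<lambda>m. (\<Sum>i<m. h\<^sub>p (n i \<omega>)) / real m) \<longlonglongrightarrow> expectation (\<lambda>\<omega>. h\<^sub>p (n 0 \<omega>))"
    and "AE \<omega> in M. (\<lambda>m. (\<Sum>i<m. h\<^sub>n (n i \<omega>)) / real m) \<longlonglongrightarrow> expectation (\<lambda>\<omega>. h\<^sub>n (n 0 \<omega>))"
    by (rule strong_law_sample_nonneg[OF meas(1) growth'(1)] strong_law_sample_nonneg[OF meas(2) growth'(2)],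
        simp add: h\<^sub>p_def h\<^sub>n_def)+
  then show ?thesis
  proof eventually_elim
    case (elim \<omega>)
    show ?case
      unfolding mean average using tendsto_diff[OF elim] .
  qed
qed

lemma expectation_weighted_sample_in_span:
  fixes G :: "real^'d \<Rightarrow> real" and x :: "nat \<Rightarrow> real^'d"
  assumes G: "G \<in> borel_measurable borel" and bounded: "\<And>v. \<bar>G v\<bar> \<le> 1"
    and orth: "\<And>u. (\<And>r. r < L \<Longrightarrow> u \<bullet> x r = 0) \<Longrightarrow> expectation (\<lambda>\<omega>. (n 0 \<omega> \<bullet> u) * G (n 0 \<omega>)) = 0"
  shows "\<exists>\<alpha>. (\<chi> j. expectation (\<lambda>\<omega>. n 0 \<omega> $ j * G (n 0 \<omega>))) = (\<Sum>k<L. \<alpha> k *\<^sub>R x k)"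
proof (rule ex_lincomb_if_orthogonal_to_complement)
  fix u :: "real^'d" assume u: "\<And>r. r < L \<Longrightarrow> u \<bullet> x r = 0"
  have "\<bar>v $ j * G v\<bar> \<le> \<bar>v $ j\<bar> + 1" for v j
    using mult_left_le[OF bounded[of v] abs_ge_zero[of "v $ j"]] by (simp add: abs_mult)
  then have int: "integrable M (\<lambda>\<omega>. n 0 \<omega> $ j * G (n 0 \<omega>))" for j
    using G by (intro integrable_sample_fun(1)) measurable
  have "(\<chi> j. expectation (\<lambda>\<omega>. n 0 \<omega> $ j * G (n 0 \<omega>))) \<bullet> u =
      expectation (\<lambda>\<omega>. \<Sum>j\<in>UNIV. n 0 \<omega> $ j * G (n 0 \<omega>) * u $ j)"
    using int by (simp add: inner_vec_def)
  also have "\<dots> = expectation (\<lambda>\<omega>. (n 0 \<omega> \<bullet> u) * G (n 0 \<omega>))"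
    by (rule Bochner_Integration.integral_cong) (auto simp: inner_vec_def sum_distrib_left ac_simps)
  also have "\<dots> = 0"
    using orth[OF u] .
  finally show "(\<chi> j. expectation (\<lambda>\<omega>. n 0 \<omega> $ j * G (n 0 \<omega>))) \<bullet> u = 0" .
qed

lemma weighted_mean_samples_eq_0:
  fixes G :: "real^'d \<Rightarrow> real"
  assumes G: "G \<in> borel_measurable borel" and nonneg: "\<And>v. 0 \<le> G v" and le_1: "\<And>v. G v \<le> 1"
    and mean: "expectation (\<lambda>\<omega>. G (n 0 \<omega>)) = 0"
  shows "AE \<omega> in M. weighted_mean G (\<lambda>i. n i \<omega>) = (\<lambda>_. 0)"
proof -
  have growth: "\<bar>G v\<bar> \<le> \<bar>v $ j\<bar> + 1" for v j
    using nonneg[of v] le_1[of v] by simp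
  have "AE \<omega> in M. G (n i \<omega>) = 0" for i
  proof -
    have "expectation (\<lambda>\<omega>. G (n i \<omega>)) = 0"
      using expectation_sample_eq[OF G, of i] mean by simp
    then show ?thesis
      using integral_nonneg_eq_0_iff_AE[OF integrable_sample_fun(1)[OF G growth]] nonneg by simp
  qed
  then have "AE \<omega> in M. \<forall>i. G (n i \<omega>) = 0"
    by (simp add: AE_all_countable)
  then show ?thesis
    by eventually_elim (simp add: weighted_mean_def[abs_def])
qed

lemma weighted_mean_samples_tendsto:
  fixes G :: "real^'d \<Rightarrow> real"
  assumes G: "G \<in> borel_measurable borel" and nonneg: "\<And>v. 0 \<le> G v" and le_1: "\<And>v. G v \<le> 1"
    and mean: "expectation (\<lambda>\<omega>. G (n 0 \<omega>)) \<noteq> 0"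
  shows "AE \<omega> in M. weighted_mean G (\<lambda>i. n i \<omega>) \<longlonglongrightarrow>
    (1 / expectation (\<lambda>\<omega>. G (n 0 \<omega>))) *\<^sub>R (\<chi> j. expectation (\<lambda>\<omega>. n 0 \<omega> $ j * G (n 0 \<omega>)))"
proof -
  have growth: "\<bar>G v\<bar> \<le> \<bar>v $ j\<bar> + 1" for v j
    using nonneg[of v] le_1[of v] by simp
  have "\<bar>v $ j * G v\<bar> \<le> \<bar>v $ j\<bar> + 1" for v j
    using mult_left_le[of "G v" "\<bar>v $ j\<bar>"] nonneg[of v] le_1[of v] by (simp add: abs_mult)
  then have "AE \<omega> in M. \<forall>j\<in>UNIV. (\<lambda>m. (\<Sum>i<m. n i \<omega> $ j * G (n i \<omega>)) / real m) \<longlonglongrightarrow>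
      expectation (\<lambda>\<omega>. n 0 \<omega> $ j * G (n 0 \<omega>))"
    using G by (subst AE_finite_all) (auto intro!: strong_law_sample)
  moreover have "AE \<omega> in M. (\<lambda>m. (\<Sum>i<m. G (n i \<omega>)) / real m) \<longlonglongrightarrow> expectation (\<lambda>\<omega>. G (n 0 \<omega>))"
    by (rule strong_law_sample[OF G growth])
  ultimately show ?thesis
  proof eventually_elim
    case (elim \<omega>)
    have "(\<lambda>m. (1 / real m) *\<^sub>R (\<Sum>i<m. G (n i \<omega>) *\<^sub>R n i \<omega>)) \<longlonglongrightarrow>
        (\<chi> j. expectation (\<lambda>\<omega>. n 0 \<omega> $ j * G (n 0 \<omega>)))"
      using elim(1) by (intro vec_tendstoI) (simp add: sum_component mult.commute)
    with elim(2) mean show ?case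
      by (rule tendsto_weighted_mean)
  qed
qed

lemma weighted_mean_samples_tendsto_span:
  fixes G :: "real^'d \<Rightarrow> real" and x :: "nat \<Rightarrow> real^'d"
  assumes G: "G \<in> borel_measurable borel" and nonneg: "\<And>v. 0 \<le> G v" and le_1: "\<And>v. G v \<le> 1"
    and orth: "\<And>u. (\<And>r. r < L \<Longrightarrow> u \<bullet> x r = 0) \<Longrightarrow> expectation (\<lambda>\<omega>. (n 0 \<omega> \<bullet> u) * G (n 0 \<omega>)) = 0"
  shows "\<exists>\<alpha>. AE \<omega> in M. weighted_mean G (\<lambda>i. n i \<omega>) \<longlonglongrightarrow> (\<Sum>k<L. \<alpha> k *\<^sub>R x k)"
proof (cases "expectation (\<lambda>\<omega>. G (n 0 \<omega>)) = 0")
  case True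
  \<comment> \<open>then the means vanish almost surely, as \<open>1 / 0 = 0\<close>\<close>
  have "AE \<omega> in M. weighted_mean G (\<lambda>i. n i \<omega>) = (\<lambda>_. 0)"
    using True by (rule weighted_mean_samples_eq_0[OF G nonneg le_1])
  then have "AE \<omega> in M. weighted_mean G (\<lambda>i. n i \<omega>) \<longlonglongrightarrow> (\<Sum>k<L. 0 *\<^sub>R x k)"
    by eventually_elim simp
  then show ?thesis
    by (intro exI[of _ "\<lambda>_. 0"])
next
  case False
  have "\<bar>G v\<bar> \<le> 1" for v
    using nonneg[of v] le_1[of v] by simp
  then obtain \<alpha> where "(\<chi> j. expectation (\<lambda>\<omega>. n 0 \<omega> $ j * G (n 0 \<omega>))) = (\<Sum>k<L. \<alpha> k *\<^sub>R x k)"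
    using expectation_weighted_sample_in_span[OF G _ orth] by blast
  with weighted_mean_samples_tendsto[OF G nonneg le_1 False] show ?thesis
    by (intro exI[of _ "\<lambda>k. (1 / expectation (\<lambda>\<omega>. G (n 0 \<omega>))) * \<alpha> k"]) (simp add: scaleR_sum_right)
qed

end

theorem theorem4:
  fixes M :: "'w measure" and L :: nat
    and x :: "nat \<Rightarrow> real^'d"
    and n :: "nat \<Rightarrow> 'w \<Rightarrow> real^'d"
  assumes "prob_space M"
    and "L \<ge> 2"
    and "\<forall>k<L. \<forall>k'<L. k \<noteq> k' \<longrightarrow> x k \<noteq> x k'"
    and "\<forall>k<L. norm (x k) = norm (x 0)"
    and "prob_space.indep_vars M (\<lambda>_. borel) (\<lambda>(i, j) \<omega>. n i \<omega> $ j) UNIV"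
    and "\<forall>i j. distributed M lborel (\<lambda>\<omega>. n i \<omega> $ j) (\<lambda>t. ennreal (std_normal_density t))"
  shows "(\<forall>l<L. \<exists>\<alpha> :: nat \<Rightarrow> real.
            AE \<omega> in M. (\<lambda>m. hard_est x L (\<lambda>i. n i \<omega>) m l) \<longlonglongrightarrow> (\<Sum>k<L. \<alpha> k *\<^sub>R x k))
       \<and> (\<forall>l<L. \<exists>\<alpha> :: nat \<Rightarrow> real.
            AE \<omega> in M. (\<lambda>m. soft_est x L (\<lambda>i. n i \<omega>) m l) \<longlonglongrightarrow> (\<Sum>k<L. \<alpha> k *\<^sub>R x k))"
proof -
  interpret gaussian_samples M n
    using assms(1,5,6) by (simp add: gaussian_samples_def gaussian_samples_axioms_def)
  have "\<exists>\<alpha>. AE \<omega> in M. (\<lambda>m. hard_est x L (\<lambda>i. n i \<omega>) m l) \<longlonglongrightarrow> (\<Sum>k<L. \<alpha> k *\<^sub>R x k)" if "l < L" for l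
    unfolding hard_est_eq_weighted_mean using that
    by (intro weighted_mean_samples_tendsto_span borel_measurable_hard_assign_indicator
        expectation_inner_mult_hard_assign_eq_0) auto
  moreover have "\<exists>\<alpha>. AE \<omega> in M. (\<lambda>m. soft_est x L (\<lambda>i. n i \<omega>) m l) \<longlonglongrightarrow> (\<Sum>k<L. \<alpha> k *\<^sub>R x k)" if "l < L" for l
    unfolding soft_est_eq_weighted_mean soft_weight_eq_softmax using that
    by (intro weighted_mean_samples_tendsto_span borel_measurable_continuous_onI continuous_on_softmax
        softmax_nonneg softmax_le_1 expectation_inner_mult_softmax_eq_0) auto
  ultimately show ?thesis
    by blast
qed

end
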